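(* Let $h$ and $k$ be relatively prime odd integers with $k>0$. Then $$B_{1}(h,k)=\frac{2h}{\pi}\sum_{\substack{n=1\\ 2n-1\not\equiv 0 \pmod{k}}}^{\infty}\frac{1}{2n-1}\tan\left(\frac{\pi h(2n-1)}{2k}\right)+\frac{1}{2k}-\frac{1}{2}.$$
   Context: $[x]$ denotes the greatest integer $\le x$. For integers $h,k$ with $k>0$ and $\gcd(h,k)=1$, $$B_{1}(h,k)=\sum_{j=1}^{k-1}(-1)^{j+\left[\frac{hj}{k}\right]}\left[\frac{hj}{k}\right].$$ *)

theory Defs
  imports Complex_Main
begin

definition B1 :: "int \<Rightarrow> int \<Rightarrow> int" where
  "B1 h k = (\<Sum>j = 1..k-1. (if even (j + \<lfloor>real_of_int (h*j) / real_of_int k\<rfloor>) then 1 else -1)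
                              * \<lfloor>real_of_int (h*j) / real_of_int k\<rfloor>)"

end

theory Submission
  imports Defs "HOL-Analysis.Analysis" "HOL-Number_Theory.Modular_Inverse"
begin

text \<open>
  For odd m not divisible by the odd number k,
  tan (\<pi>m/2k) = (2/k) \<Sum>_{j<k} (-1)^j j sin (\<pi>jm/k): this is the weighted geometric sum
  \<Sum> j v^j over the k-th root of unity v = -exp (i\<pi>m/k). Taking m = h(2n+1) and exchanging this
  finite sum with the series reduces the tangent series to square-wave series
  \<Sum> sin ((2n+1)x) / (2n+1), which equal (-1)^\<lfloor>hj/k\<rfloor> \<pi>/4 at x = \<pi>hj/k. Hence the series is
  (\<pi>/2k) \<Sum>_j (-1)^(j + \<lfloor>hj/k\<rfloor>) j. Writing hj = k\<lfloor>hj/k\<rfloor> + r_j, the sign (-1)^(j + \<lfloor>hj/k\<rfloor>)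
  equals (-1)^r_j because h and k are odd, and j \<mapsto> r_j permutes {1..k-1}; so h times the last
  sum is k B_1(h,k) + (k-1)/2.
\<close>

definition parity_sign :: "int \<Rightarrow> 'a::ring_1" where
  "parity_sign m = (if even m then 1 else -1)"

lemma parity_sign_add: "parity_sign (a + b) = parity_sign a * parity_sign b"
  by (simp add: parity_sign_def)

lemma parity_sign_odd_mult: "odd a \<Longrightarrow> parity_sign (a * b) = parity_sign b"
  by (simp add: parity_sign_def)

lemma of_int_parity_sign [simp]: "of_int (parity_sign m) = parity_sign m"
  by (simp add: parity_sign_def)

lemma parity_sign_of_nat: "parity_sign (int n) = (-1) ^ n"
  by (simp add: parity_sign_def)

lemma cos_pi_of_int: "cos (pi * of_int m) = parity_sign m"
  by (simp add: parity_sign_def)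

section \<open>The square-wave series\<close>

definition odd_power_sum :: "nat \<Rightarrow> complex \<Rightarrow> complex" where
  "odd_power_sum N z = (\<Sum>n<N. z ^ (2*n+1) / of_nat (2*n+1))"

definition artanh_Ln :: "complex \<Rightarrow> complex" where
  "artanh_Ln z = (Ln (1 + z) - Ln (1 - z)) / 2"

lemma has_field_derivative_odd_power_sum_minus_artanh_Ln:
  assumes "1 + u \<notin> \<real>\<^sub>\<le>\<^sub>0" "1 - u \<notin> \<real>\<^sub>\<le>\<^sub>0"
  shows "((\<lambda>u. odd_power_sum N u - artanh_Ln u) has_field_derivative
           - ((u^2)^N) / (1 - u^2)) (at u)"
proof -
  have "1 + u \<noteq> 0" "1 - u \<noteq> 0"
    using assms by auto
  moreover have "1 - u^2 = (1 - u) * (1 + u)"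
    by (simp add: power2_eq_square algebra_simps)
  ultimately have sq: "1 - u^2 \<noteq> 0"
    by simp
  have "((\<lambda>u. u ^ (2*n+1) / of_nat (2*n+1)) has_field_derivative (u^2)^n) (at u)" for n
  proof -
    have "((\<lambda>u. u ^ Suc (2*n) / of_nat (Suc (2*n))) has_field_derivative
            (1 + of_nat (2*n)) * (1 * u ^ (2*n)) / of_nat (Suc (2*n))) (at u)"
      by (intro DERIV_cdivide DERIV_power_Suc DERIV_ident)
    moreover have "(1 + of_nat (2*n)) * (1 * u ^ (2*n)) / of_nat (Suc (2*n)) = (u^2)^n"
      using of_nat_neq_0[of "2*n", where ?'a = complex]
      by (simp only: of_nat_Suc[symmetric] mult_1 power_mult) (simp del: of_nat_Suc)
    ultimately show ?thesis
      by simp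
  qed
  then have d1: "(odd_power_sum N has_field_derivative (\<Sum>n<N. (u^2)^n)) (at u)"
    unfolding odd_power_sum_def by (intro DERIV_sum)
  have d2: "(artanh_Ln has_field_derivative 1 / (1 - u^2)) (at u)"
    unfolding artanh_Ln_def using assms \<open>1 + u \<noteq> 0\<close> \<open>1 - u \<noteq> 0\<close> sq
    by (auto intro!: derivative_eq_intros simp: field_simps power2_eq_square)
  have eq: "(\<Sum>n<N. (u^2)^n) - 1 / (1 - u^2) = - ((u^2)^N) / (1 - u^2)"
  proof -
    have "(\<Sum>n<N. (u^2)^n) = (1 - (u^2)^N) / (1 - u^2)"
      using sq by (simp add: sum_gp_strict)
    then show ?thesis
      by (simp add: diff_divide_distrib)
  qed
  show ?thesis
    using DERIV_diff[OF d1 d2] unfolding eq .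
qed

text \<open>
  In place of Abel's limit theorem: the remainder vanishes at 0, and along the radius [0, z] its
  derivative -(rz)^2N z / (1 - (rz)^2) is bounded by r^2N / (1 - \<bar>Re z\<bar>)^2, whose integral over
  [0, 1] is O(1/N).
\<close>

lemma norm_odd_power_sum_minus_artanh_Ln_le:
  assumes z: "norm z = 1" and Re_z: "\<bar>Re z\<bar> < 1"
  shows "norm (odd_power_sum N z - artanh_Ln z) \<le> 1 / ((2 * real N + 1) * (1 - \<bar>Re z\<bar>)^2)"
proof -
  define c where "c = 1 - \<bar>Re z\<bar>"
  define F where "F r = odd_power_sum N (of_real r * z) - artanh_Ln (of_real r * z)" for r
  define D where "D r = - (((of_real r * z)^2)^N) / (1 - (of_real r * z)^2) * z" for r
  have c: "c > 0"
    using Re_z by (simp add: c_def)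
  have Re_ge: "c \<le> Re (1 + of_real r * z)" "c \<le> Re (1 - of_real r * z)" if "r \<in> {0..1}" for r
  proof -
    have "\<bar>r * Re z\<bar> \<le> \<bar>Re z\<bar>"
      using that by (auto simp: abs_mult intro: mult_left_le_one_le)
    then show "c \<le> Re (1 + of_real r * z)" "c \<le> Re (1 - of_real r * z)"
      by (auto simp: c_def)
  qed
  have "(F has_vector_derivative D r) (at r within {0..1})" if "r \<in> {0..1}" for r
  proof -
    have "1 + of_real r * z \<notin> \<real>\<^sub>\<le>\<^sub>0" "1 - of_real r * z \<notin> \<real>\<^sub>\<le>\<^sub>0"
      using Re_ge[OF that] c by (auto simp: complex_nonpos_Reals_iff)
    from has_field_derivative_odd_power_sum_minus_artanh_Ln[OF this]
    have "((\<lambda>w. odd_power_sum N (w * z) - artanh_Ln (w * z)) has_field_derivative D r) (at (of_real r))"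
      unfolding D_def by (rule DERIV_chain2) (auto intro!: derivative_eq_intros)
    then show ?thesis
      unfolding F_def by (rule has_vector_derivative_real_field)
  qed
  then have int_D: "(D has_integral F 1 - F 0) {0..1}"
    by (intro fundamental_theorem_of_calculus) auto
  have int_bound: "((\<lambda>r. r^(2*N) / c^2) has_integral 1 / ((2 * real N + 1) * c^2)) {0..1}"
  proof -
    have "((\<lambda>r. r^Suc (2*N) / ((2 * real N + 1) * c^2)) has_real_derivative
            (1 + real (2*N)) * (1 * r^(2*N)) / ((2 * real N + 1) * c^2)) (at r within {0..1})" for r
      by (intro DERIV_cdivide DERIV_power_Suc DERIV_ident)
    moreover have "(1 + real (2*N)) * (1 * r^(2*N)) / ((2 * real N + 1) * c^2) = r^(2*N) / c^2" for r
      using c by (simp add: add.commute)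
    ultimately show ?thesis
      using fundamental_theorem_of_calculus[of 0 1 "\<lambda>r. r^Suc (2*N) / ((2 * real N + 1) * c^2)"]
      by (simp add: has_real_derivative_iff_has_vector_derivative)
  qed
  have norm_D: "norm (D r) \<le> r^(2*N) / c^2" if r: "r \<in> {0..1}" for r
  proof -
    have "c \<le> norm (1 + of_real r * z)" "c \<le> norm (1 - of_real r * z)"
      using Re_ge[OF r] complex_Re_le_cmod order_trans by blast+
    then have "c * c \<le> norm (1 - of_real r * z) * norm (1 + of_real r * z)"
      using c by (intro mult_mono) auto
    also have "\<dots> = norm (1 - (of_real r * z)^2)"
      by (simp add: power2_eq_square algebra_simps flip: norm_mult)
    finally have den: "c^2 \<le> norm (1 - (of_real r * z)^2)"
      by (simp add: power2_eq_square)
    have "norm (D r) = r^(2*N) / norm (1 - (of_real r * z)^2)"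
      using r z by (simp add: D_def norm_mult norm_divide norm_power power_mult[symmetric])
    also have "\<dots> \<le> r^(2*N) / c^2"
    proof (rule divide_left_mono)
      show "0 < norm (1 - (of_real r * z)^2) * c^2"
        using den c by (intro mult_pos_pos) auto
    qed (use den r in auto)
    finally show ?thesis .
  qed
  have "norm (integral {0..1} D) \<le> integral {0..1} (\<lambda>r. r^(2*N) / c^2)"
    using int_D int_bound norm_D by (intro integral_norm_bound_integral) auto
  then have "norm (F 1 - F 0) \<le> 1 / ((2 * real N + 1) * c^2)"
    unfolding integral_unique[OF int_D] integral_unique[OF int_bound] .
  moreover have "F 0 = 0" "F 1 = odd_power_sum N z - artanh_Ln z"
    by (simp_all add: F_def odd_power_sum_def artanh_Ln_def)
  ultimately show ?thesis
    by (simp add: c_def)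
qed

lemma odd_power_sum_tendsto_artanh_Ln:
  assumes "norm z = 1" "\<bar>Re z\<bar> < 1"
  shows "(\<lambda>N. odd_power_sum N z) \<longlonglongrightarrow> artanh_Ln z"
proof -
  define c where "c = (1 - \<bar>Re z\<bar>)^2"
  have "c > 0"
    using assms(2) by (simp add: c_def)
  have "(\<lambda>N. odd_power_sum N z - artanh_Ln z) \<longlonglongrightarrow> 0"
  proof (rule Lim_null_comparison)
    show "\<forall>\<^sub>F N in sequentially. norm (odd_power_sum N z - artanh_Ln z) \<le> inverse (real (Suc N)) / c"
    proof (intro always_eventually allI)
      fix N
      have "1 / ((2 * real N + 1) * c) \<le> 1 / ((real N + 1) * c)"
        using \<open>c > 0\<close> by (intro divide_left_mono mult_right_mono mult_pos_pos) auto
      also have "\<dots> = inverse (real (Suc N)) / c"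
        by (simp add: field_simps)
      finally have "1 / ((2 * real N + 1) * c) \<le> inverse (real (Suc N)) / c" .
      then show "norm (odd_power_sum N z - artanh_Ln z) \<le> inverse (real (Suc N)) / c"
        using norm_odd_power_sum_minus_artanh_Ln_le[OF assms, of N] by (simp add: c_def)
    qed
    show "(\<lambda>N. inverse (real (Suc N)) / c) \<longlonglongrightarrow> 0"
      using tendsto_divide_zero[OF LIMSEQ_inverse_real_of_nat] .
  qed
  then show ?thesis
    by (rule LIM_zero_cancel)
qed

lemma Im_Ln_of_real_mult_cis:
  assumes "0 < r" "-pi < t" "t \<le> pi"
  shows "Im (Ln (of_real r * cis t)) = t"
proof -
  have "Ln (of_real r * cis t) = Ln (of_real r) + Ln (cis t)"
    using assms by (intro Ln_times_of_real) auto
  moreover have "Ln (cis t) = \<i> * of_real t"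
    using assms by (simp add: cis_conv_exp Ln_exp mult.commute)
  ultimately show ?thesis
    using assms by (simp add: Ln_of_real)
qed

lemma Im_artanh_Ln_cis:
  assumes "0 < x" "x < pi"
  shows "Im (artanh_Ln (cis x)) = pi / 4"
proof -
  have "cos (x/2) > 0" "sin (x/2) > 0"
    using assms by (auto intro: cos_gt_zero_pi sin_gt_zero)
  have sq: "sin (x/2) * sin (x/2) = 1 - cos (x/2) * cos (x/2)"
          "cos (x/2) * cos (x/2) = 1 - sin (x/2) * sin (x/2)"
    using sin_cos_squared_add3[of "x/2"] by linarith+
  have plus: "1 + cis x = of_real (2 * cos (x/2)) * cis (x/2)"
    using cos_double[of "x/2"] sin_double[of "x/2"] sq(1)
    by (simp add: complex_eq_iff power2_eq_square algebra_simps)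
  have minus: "1 - cis x = of_real (2 * sin (x/2)) * cis (x/2 - pi/2)"
    using cos_double[of "x/2"] sin_double[of "x/2"] sq(2)
    by (simp add: complex_eq_iff cos_diff sin_diff power2_eq_square algebra_simps)
  have "Im (Ln (1 + cis x)) = x/2"
    unfolding plus by (rule Im_Ln_of_real_mult_cis) (use \<open>cos (x/2) > 0\<close> assms in auto)
  moreover have "Im (Ln (1 - cis x)) = x/2 - pi/2"
    unfolding minus by (rule Im_Ln_of_real_mult_cis) (use \<open>sin (x/2) > 0\<close> assms in auto)
  ultimately show ?thesis
    by (simp add: artanh_Ln_def)
qed

lemma sums_sin_odd_multiples:
  assumes "0 < x" "x < pi"
  shows "(\<lambda>n. sin ((2 * real n + 1) * x) / (2 * real n + 1)) sums (pi / 4)"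
proof -
  have "\<bar>cos x\<bar> < 1"
    using cos_mono_less_eq[of x 0] cos_mono_less_eq[of pi x] assms by auto
  then have "(\<lambda>N. Im (odd_power_sum N (cis x))) \<longlonglongrightarrow> Im (artanh_Ln (cis x))"
    by (intro tendsto_Im odd_power_sum_tendsto_artanh_Ln) auto
  moreover have "Im (cis x ^ (2*n+1) / of_nat (2*n+1)) = sin ((2 * real n + 1) * x) / (2 * real n + 1)" for n
    by (simp only: Im_divide_of_nat Complex.DeMoivre cis.sel) (simp add: add.commute)
  then have "Im (odd_power_sum N (cis x)) = (\<Sum>n<N. sin ((2 * real n + 1) * x) / (2 * real n + 1))" for N
    by (simp add: odd_power_sum_def Im_sum)
  ultimately show ?thesis
    using Im_artanh_Ln_cis[OF assms] by (simp add: sums_def)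
qed

lemma sums_sin_odd_multiples_parity_sign:
  assumes "x / pi \<notin> \<int>"
  shows "(\<lambda>n. sin ((2 * real n + 1) * x) / (2 * real n + 1)) sums (parity_sign \<lfloor>x / pi\<rfloor> * (pi / 4))"
proof -
  define m where "m = \<lfloor>x / pi\<rfloor>"
  define y where "y = x - pi * of_int m"
  have "of_int m \<noteq> x / pi"
    using assms Ints_of_int by metis
  then have "of_int m < x / pi" "x / pi < of_int m + 1"
    unfolding m_def by (auto simp: order_le_neq_trans)
  then have y: "0 < y" "y < pi"
    by (simp_all add: y_def field_simps)
  have "sin ((2 * real n + 1) * x) = parity_sign m * sin ((2 * real n + 1) * y)" for n
  proof -
    have "(2 * real n + 1) * x = (2 * real n + 1) * y + pi * of_int ((2 * int n + 1) * m)"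
      by (simp add: y_def algebra_simps)
    moreover have "parity_sign ((2 * int n + 1) * m) = (parity_sign m :: real)"
      by (simp add: parity_sign_odd_mult)
    ultimately show ?thesis
      by (simp only: sin_add sin_npi_int cos_pi_of_int) simp
  qed
  then show ?thesis
    using sums_mult[OF sums_sin_odd_multiples[OF y], of "parity_sign m"] by (simp add: m_def)
qed

section \<open>The tangent as a finite sine sum\<close>

lemma weighted_geometric_sum:
  fixes v :: "'a::comm_ring_1"
  shows "(1 - v)^2 * (\<Sum>j<K. of_nat j * v^j) = v - of_nat K * v^K + (of_nat K - 1) * v^(K+1)"
proof (induction K)
  case (Suc K)
  have "(1 - v)^2 * (\<Sum>j<Suc K. of_nat j * v^j)
        = (1 - v)^2 * (\<Sum>j<K. of_nat j * v^j) + (1 - v)^2 * (of_nat K * v^K)"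
    by (simp add: algebra_simps)
  also have "\<dots> = v - of_nat (Suc K) * v^(Suc K) + (of_nat (Suc K) - 1) * v^(Suc K + 1)"
    unfolding Suc.IH by (simp add: power2_eq_square algebra_simps)
  finally show ?case .
qed simp

lemma weighted_geometric_sum_root_of_unity:
  fixes v :: "'a::field"
  assumes "v ^ K = 1" "v \<noteq> 1"
  shows "(\<Sum>j<K. of_nat j * v^j) = of_nat K / (v - 1)"
proof -
  define S where "S = (\<Sum>j<K. of_nat j * v^j)"
  have "(v - 1) * ((v - 1) * S - of_nat K) = 0"
    using weighted_geometric_sum[of v K] assms(1) by (simp add: S_def power2_eq_square algebra_simps)
  then have "(v - 1) * S = of_nat K"
    using assms(2) by simp
  then show ?thesis
    using assms(2) by (simp add: S_def field_simps)
qed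

text \<open>
  With u = exp (2it) one has i tan t = 1 - 2/(u+1), and -K/(u+1) is the weighted geometric sum
  of the K-th root of unity -u.
\<close>

lemma tan_eq_sum_sin:
  fixes t :: real
  assumes "odd K" "cos t \<noteq> 0" "cis (2 * t) ^ K = -1"
  shows "tan t = 2 / real K * (\<Sum>j<K. (-1)^j * real j * sin (2 * real j * t))"
proof -
  define u where "u = cis (2 * t)"
  define S where "S = (\<Sum>j<K. of_nat j * (-u)^j)"
  have sq: "sin t * sin t = 1 - cos t * cos t" "cos t * cos t = 1 - sin t * sin t"
    using sin_cos_squared_add3[of t] by linarith+
  have plus: "u + 1 = 2 * of_real (cos t) * cis t"
    using cos_double[of t] sin_double[of t] sq(1)
    by (simp add: u_def complex_eq_iff power2_eq_square algebra_simps)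
  have minus: "u - 1 = 2 * \<i> * of_real (sin t) * cis t"
    using cos_double[of t] sin_double[of t] sq(2)
    by (simp add: u_def complex_eq_iff power2_eq_square algebra_simps)
  have "u + 1 \<noteq> 0"
    using assms(2) plus by simp
  have "u - 1 = \<i> * of_real (tan t) * (2 * of_real (cos t) * cis t)"
    unfolding minus using assms(2) by (simp add: tan_def field_simps)
  then have "\<i> * of_real (tan t) = (u - 1) / (u + 1)"
    unfolding plus[symmetric] using \<open>u + 1 \<noteq> 0\<close> by simp
  also have "\<dots> = ((u + 1) - 2) / (u + 1)"
    by simp
  also have "\<dots> = 1 - 2 / (u + 1)"
    using \<open>u + 1 \<noteq> 0\<close> by (subst diff_divide_distrib) simp
  finally have tan: "\<i> * of_real (tan t) = 1 - 2 / (u + 1)" .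
  have "(-u)^K = 1"
    using assms(1,3) by (simp add: u_def)
  moreover have "-u \<noteq> 1"
    using \<open>u + 1 \<noteq> 0\<close> by (auto simp: add_eq_0_iff)
  ultimately have "S = - of_nat K / (u + 1)"
    using weighted_geometric_sum_root_of_unity[of "-u" K]
    by (simp only: S_def minus_add_distrib[symmetric] diff_conv_add_uminus divide_minus_right
        minus_divide_left simp_thms)
  moreover have "(of_nat K :: complex) \<noteq> 0"
    using assms(1) by (auto elim: oddE)
  ultimately have "2 * S / of_nat K = - (2 / (u + 1))"
    by simp
  then have "\<i> * of_real (tan t) = 1 + 2 * S / of_nat K"
    using tan by simp
  then have "tan t = Im (1 + 2 * S / of_nat K)"
    by (metis Im_i_times Re_complex_of_real)
  then have "tan t = 2 * Im S / real K"
    by (simp add: Im_divide_of_nat)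
  moreover have Im_term: "Im (of_nat j * (-u)^j) = (-1)^j * real j * sin (2 * real j * t)" for j
  proof -
    have "of_nat j * (-u)^j = of_real ((-1)^j * real j) * cis (real j * (2 * t))"
      unfolding power_minus[of u j] unfolding u_def Complex.DeMoivre by simp
    then show ?thesis
      by (simp only:) (simp add: mult_ac)
  qed
  moreover have "Im S = (\<Sum>j<K. (-1)^j * real j * sin (2 * real j * t))"
    unfolding S_def Im_sum Im_term ..
  ultimately show ?thesis
    by simp
qed

lemma sum_lessThan_eq_sum_int_range:
  assumes "f 0 = 0"
  shows "(\<Sum>j<K. f (int j)) = (\<Sum>j\<in>{1..<int K}. f j)"
proof -
  have "(\<Sum>j<K. f (int j)) = (\<Sum>j\<in>{1..<K}. f (int j))"
    using assms by (intro sum.mono_neutral_right) (auto simp: Suc_le_eq)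
  also have "\<dots> = (\<Sum>j\<in>int ` {1..<K}. f j)"
    by (simp add: sum.reindex)
  finally show ?thesis
    by (simp add: image_int_atLeastLessThan)
qed

lemma tan_pi_fraction_eq_sum_sin:
  fixes k m :: int
  assumes "odd k" "k > 0" "odd m" "\<not> k dvd m"
  shows "tan (pi * m / (2 * k)) = 2 / k * (\<Sum>j\<in>{1..<k}. parity_sign j * j * sin (pi * j * m / k))"
proof -
  define K where "K = nat k"
  define t where "t = pi * m / (2 * k)"
  have k_eq: "k = int K"
    using assms(2) by (simp add: K_def)
  have "cos t \<noteq> 0"
  proof
    assume "cos t = 0"
    then obtain i where "t = of_int i * (pi / 2)"
      by (auto simp: cos_zero_iff_int)
    then have "of_int m = (of_int (k * i) :: real)"
      using assms(2) by (simp add: t_def field_simps)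
    then show False
      using assms(4) by (simp only: of_int_eq_iff) simp
  qed
  moreover have "cis (2 * t) ^ K = -1"
  proof -
    have "real K * (2 * t) = pi * of_int m"
      using assms(2) by (simp add: t_def k_eq)
    then show ?thesis
      using assms(3) by (simp add: Complex.DeMoivre complex_eq_iff)
  qed
  moreover have "odd K"
    using assms(1) k_eq by simp
  ultimately have "tan t = 2 / real K * (\<Sum>j<K. (-1)^j * real j * sin (2 * real j * t))"
    by (intro tan_eq_sum_sin)
  also have "(\<Sum>j<K. (-1)^j * real j * sin (2 * real j * t))
             = (\<Sum>j\<in>{1..<k}. parity_sign j * j * sin (pi * j * m / k))"
    unfolding k_eq
    by (subst sum_lessThan_eq_sum_int_range[symmetric]) (auto simp: t_def k_eq parity_sign_of_nat field_simps)
  finally show ?thesis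
    by (simp add: t_def k_eq)
qed

section \<open>The sum \<open>B\<^sub>1\<close> and multiplication on residues\<close>

lemma sum_parity_sign_mult_self:
  fixes k :: int
  assumes "odd k" "k > 0"
  shows "2 * (\<Sum>s\<in>{1..<k}. parity_sign s * s) = k - 1"
proof -
  define m where "m = nat (k div 2)"
  have m: "k = 2 * int m + 1"
    using assms by (auto simp: m_def elim!: oddE)
  have "(\<Sum>s\<in>{1..<2 * int n + 1}. parity_sign s * s) = int n" for n
  proof (induction n)
    case (Suc n)
    have "{1..<2 * int (Suc n) + 1} = insert (2 * int n + 2) (insert (2 * int n + 1) {1..<2 * int n + 1})"
      by auto
    then show ?case
      using Suc by (simp add: parity_sign_def)
  qed simp
  then show ?thesis
    by (simp add: m)
qed

lemma sum_remainders_mult_coprime: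
  fixes h k :: int
  assumes "coprime h k"
  shows "(\<Sum>j\<in>{1..<k}. f (h * j mod k)) = (\<Sum>j\<in>{1..<k}. f j)"
  using sum.reindex_bij_betw[OF bij_betw_int_remainders_mult[OF assms]] .

lemma B1_eq_sum_div:
  "B1 h k = (\<Sum>j\<in>{1..<k}. parity_sign (j + h * j div k) * (h * j div k))"
proof -
  have "{1..k-1} = {1..<k}"
    by auto
  then show ?thesis
    unfolding B1_def floor_divide_of_int_eq by (simp add: parity_sign_def)
qed

lemma two_mult_B1_eq:
  fixes h k :: int
  assumes "odd h" "odd k" "k > 0" "coprime h k"
  shows "2 * k * B1 h k = 2 * h * (\<Sum>j\<in>{1..<k}. parity_sign (j + h * j div k) * j) + 1 - k"
proof -
  define q where "q j = h * j div k" for j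
  define r where "r j = h * j mod k" for j
  have division: "h * j = k * q j + r j" for j
    by (simp add: q_def r_def)
  have sign: "parity_sign (j + q j) = parity_sign (r j)" for j
  proof -
    have "even (h * j) = even (k * q j + r j)"
      by (simp only: division)
    then show ?thesis
      using assms(1,2) by (auto simp: parity_sign_def)
  qed
  have "h * (\<Sum>j\<in>{1..<k}. parity_sign (j + q j) * j) = (\<Sum>j\<in>{1..<k}. parity_sign (j + q j) * (h * j))"
    by (simp add: sum_distrib_left mult_ac)
  also have "\<dots> = k * (\<Sum>j\<in>{1..<k}. parity_sign (j + q j) * q j) + (\<Sum>j\<in>{1..<k}. parity_sign (r j) * r j)"
  proof -
    have "parity_sign (j + q j) * (h * j) = k * (parity_sign (j + q j) * q j) + parity_sign (r j) * r j" for j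
      unfolding division[of j] sign[of j] by (simp add: algebra_simps)
    then show ?thesis
      by (simp add: sum.distrib sum_distrib_left)
  qed
  also have "(\<Sum>j\<in>{1..<k}. parity_sign (r j) * r j) = (\<Sum>s\<in>{1..<k}. parity_sign s * s)"
    unfolding r_def by (rule sum_remainders_mult_coprime[OF assms(4)])
  finally show ?thesis
    using sum_parity_sign_mult_self[OF assms(2,3)] by (simp add: B1_eq_sum_div q_def algebra_simps)
qed

section \<open>The tangent series\<close>

lemma tan_series_term_eq_sum_sin:
  fixes h k :: int
  assumes "odd h" "odd k" "k > 0" "coprime h k"
  shows "(if (2 * int n + 1) mod k = 0 then 0
          else tan (pi * real_of_int h * (2 * real n + 1) / (2 * real_of_int k)) / (2 * real n + 1))
       = (\<Sum>j\<in>{1..<k}. 2 / k * parity_sign j * j *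
            (sin ((2 * real n + 1) * (pi * of_int (h * j) / k)) / (2 * real n + 1)))"
proof (cases "k dvd 2 * int n + 1")
  case True
  then obtain i where i: "2 * int n + 1 = k * i" ..
  have "sin ((2 * real n + 1) * (pi * of_int (h * j) / k)) = 0" for j
  proof -
    have "2 * real n + 1 = of_int k * of_int i"
      using arg_cong[OF i, of "of_int :: int \<Rightarrow> real"] by simp
    then have "(2 * real n + 1) * (pi * of_int (h * j) / k) = pi * of_int (h * j * i)"
      using assms(3) by (simp add: field_simps)
    then show ?thesis
      by (metis sin_npi_int)
  qed
  then show ?thesis
    using True by simp
next
  case False
  define m where "m = h * (2 * int n + 1)"
  have "odd m"
    using assms(1) by (simp add: m_def)
  moreover have "\<not> k dvd m"
    using False assms(4) by (simp add: m_def coprime_commute coprime_dvd_mult_right_iff)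
  ultimately have tan: "tan (pi * m / (2 * k)) = 2 / k * (\<Sum>j\<in>{1..<k}. parity_sign j * j * sin (pi * j * m / k))"
    using assms(2,3) by (intro tan_pi_fraction_eq_sum_sin)
  have "(if (2 * int n + 1) mod k = 0 then 0
          else tan (pi * real_of_int h * (2 * real n + 1) / (2 * real_of_int k)) / (2 * real n + 1))
        = tan (pi * m / (2 * k)) / (2 * real n + 1)"
    using False by (simp add: m_def dvd_eq_mod_eq_0 mult_ac)
  also have "\<dots> = (\<Sum>j\<in>{1..<k}. 2 / k * parity_sign j * j * sin (pi * j * m / k) / (2 * real n + 1))"
    unfolding tan by (simp add: sum_distrib_left sum_divide_distrib mult_ac)
  also have "\<dots> = (\<Sum>j\<in>{1..<k}. 2 / k * parity_sign j * j *
                    (sin ((2 * real n + 1) * (pi * of_int (h * j) / k)) / (2 * real n + 1)))"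
    by (simp add: m_def mult_ac)
  finally show ?thesis .
qed

lemma tan_series_sums:
  fixes h k :: int
  assumes "odd h" "odd k" "k > 0" "coprime h k"
  shows "(\<lambda>n. if (2 * int n + 1) mod k = 0 then 0
            else tan (pi * real_of_int h * (2 * real n + 1) / (2 * real_of_int k)) / (2 * real n + 1))
         sums (pi / (2 * k) * (\<Sum>j\<in>{1..<k}. parity_sign (j + h * j div k) * j))"
proof -
  have "(\<lambda>n. sin ((2 * real n + 1) * (pi * of_int (h * j) / k)) / (2 * real n + 1))
          sums (parity_sign (h * j div k) * (pi / 4))" if "j \<in> {1..<k}" for j
  proof -
    have "\<not> k dvd h * j"
      using that assms(4) by (auto simp: coprime_commute coprime_dvd_mult_right_iff zdvd_not_zless)
    then have "of_int (h * j) / of_int k \<notin> (\<int> :: real set)"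
      using assms(3) by (auto elim!: Ints_cases simp: field_simps simp flip: of_int_mult)
    moreover have "pi * of_int (h * j) / of_int k / pi = of_int (h * j) / of_int k"
      by simp
    ultimately show ?thesis
      using sums_sin_odd_multiples_parity_sign[of "pi * of_int (h * j) / k"]
      by (simp only: floor_divide_of_int_eq simp_thms)
  qed
  then have "(\<lambda>n. \<Sum>j\<in>{1..<k}. 2 / k * parity_sign j * j *
                 (sin ((2 * real n + 1) * (pi * of_int (h * j) / k)) / (2 * real n + 1)))
         sums (\<Sum>j\<in>{1..<k}. 2 / k * parity_sign j * j * (parity_sign (h * j div k) * (pi / 4)))"
    by (intro sums_sum sums_mult)
  also have "(\<Sum>j\<in>{1..<k}. 2 / k * parity_sign j * j * (parity_sign (h * j div k) * (pi / 4)))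
             = pi / (2 * k) * (\<Sum>j\<in>{1..<k}. parity_sign (j + h * j div k) * j)"
    unfolding of_int_sum sum_distrib_left by (rule sum.cong) (simp_all add: parity_sign_add)
  also have "(\<lambda>n. \<Sum>j\<in>{1..<k}. 2 / k * parity_sign j * j *
                 (sin ((2 * real n + 1) * (pi * of_int (h * j) / k)) / (2 * real n + 1)))
             = (\<lambda>n. if (2 * int n + 1) mod k = 0 then 0
                  else tan (pi * real_of_int h * (2 * real n + 1) / (2 * real_of_int k)) / (2 * real n + 1))"
    using tan_series_term_eq_sum_sin[OF assms] by simp
  finally show ?thesis .
qed

theorem theorem22:
  fixes h k :: int
  assumes "odd h" and "odd k" and "k > 0" and "coprime h k"
  shows "summable (\<lambda>n::nat. if (2 * int n + 1) mod k = 0 then 0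
            else tan (pi * real_of_int h * (2 * real n + 1) / (2 * real_of_int k)) / (2 * real n + 1))
    \<and> real_of_int (B1 h k) =
        2 * real_of_int h / pi *
          (\<Sum>n. if (2 * int n + 1) mod k = 0 then 0
                else tan (pi * real_of_int h * (2 * real n + 1) / (2 * real_of_int k)) / (2 * real n + 1))
        + 1 / (2 * real_of_int k) - 1 / 2"
proof -
  define W where "W = (\<Sum>j\<in>{1..<k}. parity_sign (j + h * j div k) * j)"
  have series: "(\<lambda>n. if (2 * int n + 1) mod k = 0 then 0
            else tan (pi * real_of_int h * (2 * real n + 1) / (2 * real_of_int k)) / (2 * real n + 1))
          sums (pi / (2 * k) * W)"
    unfolding W_def by (rule tan_series_sums[OF assms])
  have "2 * k * B1 h k = 2 * h * W + 1 - k"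
    unfolding W_def by (rule two_mult_B1_eq[OF assms])
  then have "real_of_int (2 * k * B1 h k) = real_of_int (2 * h * W + 1 - k)"
    by (rule arg_cong)
  then have "real_of_int (B1 h k) = 2 * real_of_int h / pi * (pi / (2 * k) * W) + 1 / (2 * real_of_int k) - 1 / 2"
    using assms(3) by (simp add: field_simps)
  then show ?thesis
    using sums_summable[OF series] unfolding sums_unique[OF series, symmetric] by blast
qed

end
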